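(* Let $K$ be a field of characteristic zero and $x$ a free variable. Let $\delta$ be an arbitrary $K$-derivation or an arbitrary $K$-$\mathcal{E}$-derivation of $K[x]$. Then the image $\operatorname{Im}\delta=\delta(K[x])$ is a Mathieu subspace of $K[x]$.
   Context: A $K$-derivation of a commutative $K$-algebra $\mathcal{A}$ is a $K$-linear map $D:\mathcal{A}\to\mathcal{A}$ with $D(ab)=D(a)b+aD(b)$. A $K$-$\mathcal{E}$-derivation of $\mathcal{A}$ is a $K$-linear map $\delta:\mathcal{A}\to\mathcal{A}$ with $\delta(ab)=\delta(a)b+a\delta(b)-\delta(a)\delta(b)$ for all $a,b$; equivalently $\delta=\mathrm{id}-\phi$ for some $K$-algebra endomorphism $\phi$ of $\mathcal{A}$. A $K$-subspace $V$ of a commutative $K$-algebra $\mathcal{A}$ is a Mathieu subspace (Mathieu–Zhao space) if for all $a,b\in\mathcal{A}$ with $a^m\in V$ for all $m\ge 1$, one has $a^mb\in V$ for all $m\gg 0$. *)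

theory Defs
  imports "HOL-Computational_Algebra.Polynomial"
begin

definition K_linear :: "('a::field poly \<Rightarrow> 'a poly) \<Rightarrow> bool" where
  "K_linear D \<longleftrightarrow> (\<forall>p q. D (p + q) = D p + D q) \<and> (\<forall>c p. D (smult c p) = smult c (D p))"

definition K_derivation :: "('a::field poly \<Rightarrow> 'a poly) \<Rightarrow> bool" where
  "K_derivation D \<longleftrightarrow> K_linear D \<and> (\<forall>a b. D (a * b) = D a * b + a * D b)"

definition K_E_derivation :: "('a::field poly \<Rightarrow> 'a poly) \<Rightarrow> bool" where
  "K_E_derivation d \<longleftrightarrow> K_linear d \<and>
     (\<forall>a b. d (a * b) = d a * b + a * d b - d a * d b)"

definition K_subspace :: "'a::field poly set \<Rightarrow> bool" where
  "K_subspace V \<longleftrightarrow> 0 \<in> V \<and> (\<forall>p\<in>V. \<forall>q\<in>V. p + q \<in> V) \<and> (\<forall>c. \<forall>p\<in>V. smult c p \<in> V)"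

definition Mathieu_subspace :: "'a::field poly set \<Rightarrow> bool" where
  "Mathieu_subspace V \<longleftrightarrow> K_subspace V \<and>
     (\<forall>a b. (\<forall>m::nat. m \<ge> 1 \<longrightarrow> a ^ m \<in> V) \<longrightarrow>
        (\<exists>N. \<forall>m\<ge>N. a ^ m * b \<in> V))"

end

theory Submission
  imports Defs
begin

text \<open>
  A derivation \<open>D\<close> of \<open>K[x]\<close> is \<open>pderiv \<cdot> D x\<close>, and since \<open>pderiv\<close> is onto in characteristic zero its
  image is the principal ideal generated by \<open>D x\<close>. An \<open>\<E>\<close>-derivation is either the identity or
  \<open>p \<mapsto> p - p(g)\<close> for some \<open>g\<close>. For \<open>deg g \<le> 1\<close> the image is \<open>{0}\<close>, everything, or, after conjugating the
  affine map \<open>g\<close> to a scaling \<open>x \<mapsto> l x\<close>, determined coefficientwise by the factors \<open>1 - l\<^sup>n\<close>: an ideal if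
  \<open>l\<close> is not a root of unity, and containing no nonzero \<open>a\<close> with all powers in it otherwise. For
  \<open>deg g \<ge> 2\<close>, degrees in the image are multiples of \<open>deg g\<close>; comparing degrees in \<open>a\<close> and \<open>a\<^sup>2\<close> shows that
  an \<open>a\<close> with all powers in the image is \<open>u(g)\<close>, the powers of \<open>u\<close> again lie in the image, and descent on
  the degree forces \<open>a = 0\<close>. Ideals and subspaces without such elements are trivially Mathieu subspaces.
\<close>

lemma pcompose_power_left: "(p ^ n) \<circ>\<^sub>p g = (p \<circ>\<^sub>p g) ^ n"
  by (induction n) (simp_all add: pcompose_mult pcompose_1)

lemma pcompose_monom: "monom c n \<circ>\<^sub>p g = smult c (g ^ n)"
  by (simp add: monom_altdef pcompose_smult pcompose_power_left pcompose_pCons)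

lemma degree_diff_eq_right:
  fixes p q :: "'a::ab_group_add poly"
  shows "degree p < degree q \<Longrightarrow> degree (p - q) = degree q"
  using degree_add_eq_right[of p "- q"] by simp

lemma degree_cancel_lead_coeff:
  fixes p q :: "'a::field poly"
  assumes "p \<noteq> 0" and "degree q = degree p"
  defines "r \<equiv> q - smult (lead_coeff q / lead_coeff p) p"
  shows "r = 0 \<or> degree r < degree q"
proof (rule eq_zero_or_degree_less)
  show "degree r \<le> degree q"
    unfolding r_def using assms(2) degree_smult_le by (intro degree_diff_le) auto
  show "coeff r (degree q) = 0"
    unfolding r_def using assms by simp
qed

lemma lowest_coeff_power_nonzero:
  fixes a :: "'a::field poly"
  assumes "a \<noteq> 0"
  obtains j where "\<And>r. coeff (a ^ r) (j * r) \<noteq> 0"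
proof -
  obtain q where a: "a = [:0, 1:] ^ order 0 a * q" and "\<not> [:0, 1:] dvd q"
    using order_decomp[OF assms, of 0] by auto
  then have "coeff q 0 \<noteq> 0"
    by (simp add: dvd_iff_poly_eq_0 poly_0_coeff_0)
  moreover have "a ^ r = monom 1 (order 0 a * r) * q ^ r" for r
    by (subst a) (simp add: monom_altdef power_mult_distrib power_mult)
  ultimately have "coeff (a ^ r) (order 0 a * r) \<noteq> 0" for r
    by (simp add: coeff_monom_mult coeff_0_power)
  then show ?thesis by (rule that)
qed

lemma surj_pderiv: "surj (pderiv :: 'a::field_char_0 poly \<Rightarrow> 'a poly)"
proof (rule surjI)
  fix q :: "'a poly"
  have "pderiv (\<Sum>i\<le>degree q. monom (coeff q i / of_nat (Suc i)) (Suc i))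
      = (\<Sum>i\<le>degree q. pderiv (monom (coeff q i / of_nat (Suc i)) (Suc i)))"
    using higher_pderiv_sum[of 1] by simp
  also have "\<dots> = (\<Sum>i\<le>degree q. monom (coeff q i) i)"
    by (intro sum.cong refl) (simp add: pderiv_monom del: of_nat_Suc)
  finally show "pderiv (\<Sum>i\<le>degree q. monom (coeff q i / of_nat (Suc i)) (Suc i)) = q"
    by (simp add: poly_as_sum_of_monoms)
qed

lemma K_linear_add: "K_linear D \<Longrightarrow> D (p + q) = D p + D q"
  by (simp add: K_linear_def)

lemma K_linear_smult: "K_linear D \<Longrightarrow> D (smult c p) = smult c (D p)"
  by (simp add: K_linear_def)

lemma K_linear_zero: "K_linear D \<Longrightarrow> D 0 = 0"
  using K_linear_add[of D 0 0] by (metis add_cancel_right_right)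

lemma K_subspace_range: "K_linear D \<Longrightarrow> K_subspace (range D)"
  unfolding K_subspace_def
  by (auto simp: K_linear_zero simp flip: K_linear_add K_linear_smult intro: range_eqI[of _ _ 0])

lemma surj_if_every_degree_attained:
  assumes "K_linear F" and "\<And>n. \<exists>p. F p \<noteq> 0 \<and> degree (F p) = n"
  shows "surj F"
proof -
  have "q \<in> range F" for q
  proof (induction "degree q" arbitrary: q rule: less_induct)
    case less
    obtain p where p: "F p \<noteq> 0" "degree q = degree (F p)"
      using assms(2) by metis
    define c where "c = lead_coeff q / lead_coeff (F p)"
    have "q - smult c (F p) \<in> range F"
      using degree_cancel_lead_coeff[OF p] less K_linear_zero[OF assms(1)]
      unfolding c_def by (metis rangeI)
    then obtain p' where "q - smult c (F p) = F p'" by auto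
    then have "q = F (p' + smult c p)"
      using assms(1) by (simp add: K_linear_add K_linear_smult algebra_simps)
    then show ?case by (rule range_eqI)
  qed
  then show ?thesis by blast
qed

lemma Mathieu_subspace_if_ideal:
  assumes "K_subspace V" and "\<And>a b. a \<in> V \<Longrightarrow> a * b \<in> V"
  shows "Mathieu_subspace V"
  unfolding Mathieu_subspace_def
proof (intro conjI allI impI)
  fix a b :: "'a poly"
  assume "\<forall>m::nat. m \<ge> 1 \<longrightarrow> a ^ m \<in> V"
  then have "a \<in> V" by auto
  then have "a ^ Suc k * b \<in> V" for k
    using assms(2)[of a "a ^ k * b"] by (simp add: mult.assoc)
  then show "\<exists>N. \<forall>m\<ge>N. a ^ m * b \<in> V"
    by (metis Suc_le_D)
qed (fact assms(1))

lemma Mathieu_subspace_if_only_0_has_powers_in: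
  assumes "K_subspace V" and "\<And>a. \<forall>m::nat. m \<ge> 1 \<longrightarrow> a ^ m \<in> V \<Longrightarrow> a = 0"
  shows "Mathieu_subspace V"
  unfolding Mathieu_subspace_def
proof (intro conjI allI impI)
  fix a b :: "'a poly"
  assume "\<forall>m::nat. m \<ge> 1 \<longrightarrow> a ^ m \<in> V"
  then have "a = 0" by (rule assms(2))
  moreover have "0 \<in> V" using assms(1) by (simp add: K_subspace_def)
  ultimately show "\<exists>N. \<forall>m\<ge>N. a ^ m * b \<in> V"
    by (intro exI[of _ 1]) (simp add: power_0_left)
qed (fact assms(1))

lemma Mathieu_subspace_UNIV: "Mathieu_subspace UNIV"
  by (rule Mathieu_subspace_if_ideal) (simp_all add: K_subspace_def)

lemma Mathieu_subspace_vimage_pcompose: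
  assumes "Mathieu_subspace V"
  shows "Mathieu_subspace {p. p \<circ>\<^sub>p h \<in> V}"
  unfolding Mathieu_subspace_def
proof (intro conjI allI impI)
  show "K_subspace {p. p \<circ>\<^sub>p h \<in> V}"
    using assms by (simp add: Mathieu_subspace_def K_subspace_def pcompose_add pcompose_smult)
  fix a b :: "'a poly"
  assume "\<forall>m::nat. m \<ge> 1 \<longrightarrow> a ^ m \<in> {p. p \<circ>\<^sub>p h \<in> V}"
  then have "\<forall>m::nat. m \<ge> 1 \<longrightarrow> (a \<circ>\<^sub>p h) ^ m \<in> V" by (simp add: pcompose_power_left)
  then obtain N where "\<forall>m\<ge>N. (a \<circ>\<^sub>p h) ^ m * (b \<circ>\<^sub>p h) \<in> V"
    using assms unfolding Mathieu_subspace_def by blast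
  then show "\<exists>N. \<forall>m\<ge>N. a ^ m * b \<in> {p. p \<circ>\<^sub>p h \<in> V}"
    by (auto simp: pcompose_mult pcompose_power_left)
qed

section \<open>Derivations\<close>

lemma K_derivation_const:
  assumes "K_derivation D"
  shows "D [:c:] = 0"
proof -
  have "D (1 * 1) = D 1 * 1 + 1 * D 1"
    using assms by (simp only: K_derivation_def)
  then have "D 1 = 0" by (metis add_cancel_right_right mult_1 mult_1_right)
  then show ?thesis
    using assms K_linear_smult[of D c 1] by (simp add: K_derivation_def)
qed

lemma K_derivation_eq_pderiv:
  assumes "K_derivation D"
  shows "D p = pderiv p * D [:0, 1:]"
proof (induction p rule: pCons_induct)
  case 0
  then show ?case using assms by (simp add: K_derivation_def K_linear_zero)
next
  case (pCons a p)
  have Leibniz: "D (q * r) = D q * r + q * D r" for q r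
    using assms by (simp add: K_derivation_def)
  have "pCons a p = [:a:] + [:0, 1:] * p" by simp
  then have "D (pCons a p) = D [:a:] + D ([:0, 1:] * p)"
    using assms by (metis K_derivation_def K_linear_add)
  also have "\<dots> = D [:0, 1:] * p + [:0, 1:] * D p"
    by (simp only: Leibniz K_derivation_const[OF assms] add_0_left)
  also have "\<dots> = pderiv (pCons a p) * D [:0, 1:]"
    using pCons by (simp add: pderiv_pCons algebra_simps)
  finally show ?case .
qed

lemma Mathieu_subspace_range_K_derivation:
  fixes D :: "'a::field_char_0 poly \<Rightarrow> 'a poly"
  assumes "K_derivation D"
  shows "Mathieu_subspace (range D)"
proof (rule Mathieu_subspace_if_ideal)
  show "K_subspace (range D)"
    using assms by (simp add: K_derivation_def K_subspace_range)
  fix a b assume "a \<in> range D"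
  then obtain p where p: "a = D p" by auto
  obtain P where "pderiv P = pderiv p * b"
    using surj_pderiv by (metis surjD)
  then have "D P = a * b"
    using p K_derivation_eq_pderiv[OF assms, of P] K_derivation_eq_pderiv[OF assms, of p]
    by (simp add: algebra_simps)
  then show "a * b \<in> range D" by (metis rangeI)
qed

definition comp_diff :: "'a::field poly \<Rightarrow> 'a poly \<Rightarrow> 'a poly" where
  "comp_diff g p = p - p \<circ>\<^sub>p g"

lemma K_linear_comp_diff: "K_linear (comp_diff g)"
  unfolding K_linear_def comp_diff_def by (simp add: pcompose_add pcompose_smult smult_diff_right)

lemma comp_diff_id: "comp_diff [:0, 1:] p = 0"
  by (simp add: comp_diff_def)

lemma comp_diff_const: "degree p = 0 \<Longrightarrow> comp_diff g p = 0"
  by (metis comp_diff_def degree_0_id pcompose_const diff_self)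

section \<open>Affine substitutions\<close>

lemma surj_comp_diff_translation:
  fixes \<mu> :: "'a::field_char_0"
  assumes "\<mu> \<noteq> 0"
  shows "surj (comp_diff [:\<mu>, 1:])"
proof (rule surj_if_every_degree_attained[OF K_linear_comp_diff])
  fix n
  define e where "e = comp_diff [:\<mu>, 1:] (monom 1 (Suc n))"
  have e: "e = monom 1 (Suc n) - [:\<mu>, 1:] ^ Suc n"
    by (simp add: e_def comp_diff_def pcompose_monom del: power_Suc)
  have "degree e \<le> Suc n" unfolding e
    by (rule degree_diff_le) (simp_all add: degree_monom_le degree_linear_power del: power_Suc)
  moreover have "coeff e (Suc n) = 0" unfolding e
    by (simp add: coeff_linear_power del: power_Suc)
  ultimately have "degree e \<le> n"
    using eq_zero_or_degree_less by fastforce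
  moreover have "coeff e n = - (of_nat (Suc n) * \<mu>)"
    unfolding e using coeff_linear_poly_power[of n "Suc n" \<mu> 1] by simp
  then have "coeff e n \<noteq> 0"
    using assms by (simp del: of_nat_Suc)
  ultimately show "\<exists>p. comp_diff [:\<mu>, 1:] p \<noteq> 0 \<and> degree (comp_diff [:\<mu>, 1:] p) = n"
    unfolding e_def by (metis coeff_0 le_antisym le_degree)
qed

lemma coeff_comp_diff_scaling: "coeff (comp_diff [:0, l:] p) n = (1 - l ^ n) * coeff p n"
  by (simp add: comp_diff_def coeff_pcompose_linear algebra_simps)

lemma range_comp_diff_scaling:
  fixes l :: "'a::field"
  assumes "\<And>n. n \<ge> 1 \<Longrightarrow> l ^ n \<noteq> 1"
  shows "range (comp_diff [:0, l:]) = {f. coeff f 0 = 0}"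
proof (intro equalityI subsetI)
  fix f assume "f \<in> range (comp_diff [:0, l:])"
  then show "f \<in> {f. coeff f 0 = 0}"
    by (auto simp: coeff_comp_diff_scaling)
next
  fix f :: "'a poly" assume "f \<in> {f. coeff f 0 = 0}"
  define h where "h = (\<Sum>i\<le>degree f. monom (coeff f i / (1 - l ^ i)) i)"
  have "comp_diff [:0, l:] h = f"
  proof (rule poly_eqI)
    fix n
    have "coeff h n = (if n \<le> degree f then coeff f n / (1 - l ^ n) else 0)"
      unfolding h_def by (simp add: coeff_sum coeff_monom)
    then show "coeff (comp_diff [:0, l:] h) n = coeff f n"
      using \<open>f \<in> {f. coeff f 0 = 0}\<close> assms[of n]
      by (cases "n = 0") (auto simp: coeff_comp_diff_scaling coeff_eq_0 not_le)
  qed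
  then show "f \<in> range (comp_diff [:0, l:])" by (metis rangeI)
qed

lemma Mathieu_subspace_range_comp_diff_scaling:
  fixes l :: "'a::field"
  shows "Mathieu_subspace (range (comp_diff [:0, l:]))"
proof (cases "\<exists>r\<ge>1. l ^ r = 1")
  case True
  then obtain r where r: "r \<ge> 1" "l ^ r = 1" by blast
  show ?thesis
  proof (rule Mathieu_subspace_if_only_0_has_powers_in[OF K_subspace_range[OF K_linear_comp_diff]])
    fix a assume powers: "\<forall>m::nat. m \<ge> 1 \<longrightarrow> a ^ m \<in> range (comp_diff [:0, l:])"
    show "a = 0"
    proof (rule ccontr)
      assume "a \<noteq> 0"
      then obtain j where j: "coeff (a ^ r) (j * r) \<noteq> 0"
        using lowest_coeff_power_nonzero by blast
      obtain p where "a ^ r = comp_diff [:0, l:] p"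
        using powers r(1) by blast
      moreover have "l ^ (j * r) = 1"
        using r(2) by (simp add: power_mult mult.commute[of j])
      ultimately show False
        using j by (simp add: coeff_comp_diff_scaling)
    qed
  qed
next
  case False
  then have range: "range (comp_diff [:0, l:]) = {f. coeff f 0 = 0}"
    by (intro range_comp_diff_scaling) blast
  show ?thesis
    by (rule Mathieu_subspace_if_ideal[OF K_subspace_range[OF K_linear_comp_diff]])
       (simp add: range coeff_mult_0)
qed

lemma range_comp_diff_affine:
  fixes \<mu> l :: "'a::field"
  assumes "l \<noteq> 1"
  shows "range (comp_diff [:\<mu>, l:]) = {f. f \<circ>\<^sub>p [:\<mu> / (1 - l), 1:] \<in> range (comp_diff [:0, l:])}"
proof -
  define c where "c = \<mu> / (1 - l)"
  have "[:\<mu>, l:] \<circ>\<^sub>p [:c, 1:] = [:c, 1:] \<circ>\<^sub>p [:0, l:]"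
    using assms by (simp add: c_def pcompose_pCons field_simps)
  then have conj: "comp_diff [:\<mu>, l:] p \<circ>\<^sub>p [:c, 1:] = comp_diff [:0, l:] (p \<circ>\<^sub>p [:c, 1:])" for p
    by (simp add: comp_diff_def pcompose_diff pcompose_assoc flip: pcompose_assoc)
  have shift_inverse: "p \<circ>\<^sub>p [:b, 1:] \<circ>\<^sub>p [:- b, 1:] = p" for p and b :: 'a
    by (simp add: pcompose_pCons flip: pcompose_assoc)
  show ?thesis
  proof (intro equalityI subsetI)
    fix f assume "f \<in> range (comp_diff [:\<mu>, l:])"
    then show "f \<in> {f. f \<circ>\<^sub>p [:\<mu> / (1 - l), 1:] \<in> range (comp_diff [:0, l:])}"
      using conj by (auto simp: c_def)
  next
    fix f assume "f \<in> {f. f \<circ>\<^sub>p [:\<mu> / (1 - l), 1:] \<in> range (comp_diff [:0, l:])}"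
    then obtain q where q: "f \<circ>\<^sub>p [:c, 1:] = comp_diff [:0, l:] q"
      by (auto simp: c_def)
    have "comp_diff [:\<mu>, l:] (q \<circ>\<^sub>p [:- c, 1:]) \<circ>\<^sub>p [:c, 1:] = f \<circ>\<^sub>p [:c, 1:]"
      using shift_inverse[of q "- c"] by (simp add: conj q)
    then have "comp_diff [:\<mu>, l:] (q \<circ>\<^sub>p [:- c, 1:]) = f"
      by (metis shift_inverse)
    then show "f \<in> range (comp_diff [:\<mu>, l:])" by (metis rangeI)
  qed
qed

lemma Mathieu_subspace_range_comp_diff_affine:
  fixes g :: "'a::field_char_0 poly"
  assumes "degree g \<le> 1"
  shows "Mathieu_subspace (range (comp_diff g))"
proof -
  define \<mu> l where "\<mu> = coeff g 0" and "l = coeff g 1"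
  have g: "g = [:\<mu>, l:]"
    by (rule poly_eqI) (use assms in \<open>auto simp: \<mu>_def l_def coeff_pCons coeff_eq_0 split: nat.split\<close>)
  consider "l = 1" "\<mu> = 0" | "l = 1" "\<mu> \<noteq> 0" | "l \<noteq> 1" by blast
  then show ?thesis
  proof cases
    case 1
    then have range: "range (comp_diff g) = {0}"
      by (auto simp: g comp_diff_id)
    show ?thesis
      by (rule Mathieu_subspace_if_ideal[OF K_subspace_range[OF K_linear_comp_diff]])
         (simp add: range)
  next
    case 2
    then have "range (comp_diff g) = UNIV"
      using surj_comp_diff_translation[of \<mu>] by (simp add: g)
    then show ?thesis by (simp add: Mathieu_subspace_UNIV)
  next
    case 3
    then have "range (comp_diff g) = {f. f \<circ>\<^sub>p [:\<mu> / (1 - l), 1:] \<in> range (comp_diff [:0, l:])}"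
      unfolding g by (rule range_comp_diff_affine)
    then show ?thesis
      using Mathieu_subspace_vimage_pcompose[OF Mathieu_subspace_range_comp_diff_scaling]
      by simp
  qed
qed

section \<open>Substitutions of degree at least two\<close>

lemma pcompose_remainder:
  fixes a g :: "'a::field poly"
  assumes "degree g \<ge> 1"
  obtains u r where "a = u \<circ>\<^sub>p g + r" and "r = 0 \<or> \<not> degree g dvd degree r"
proof -
  have "\<exists>u r. a = u \<circ>\<^sub>p g + r \<and> (r = 0 \<or> \<not> degree g dvd degree r)"
  proof (induction "degree a" arbitrary: a rule: less_induct)
    case less
    show ?case
    proof (cases "a \<noteq> 0 \<and> degree g dvd degree a")
      case False
      then show ?thesis by (metis add_0 pcompose_0)
    next
      case True
      then obtain j where j: "degree a = degree g * j" by blast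
      have "g \<noteq> 0" using assms by auto
      then have gj: "g ^ j \<noteq> 0" "degree a = degree (g ^ j)"
        by (simp_all add: j degree_power_eq)
      define c where "c = lead_coeff a / lead_coeff (g ^ j)"
      have "\<exists>u r. a - smult c (g ^ j) = u \<circ>\<^sub>p g + r \<and> (r = 0 \<or> \<not> degree g dvd degree r)"
        using degree_cancel_lead_coeff[OF gj] less unfolding c_def
        by (metis add_0 pcompose_0)
      then obtain u r where "a - smult c (g ^ j) = u \<circ>\<^sub>p g + r" "r = 0 \<or> \<not> degree g dvd degree r"
        by blast
      then have "a = (u + monom c j) \<circ>\<^sub>p g + r \<and> (r = 0 \<or> \<not> degree g dvd degree r)"
        by (simp add: pcompose_add pcompose_monom algebra_simps)
      then show ?thesis by blast
    qed
  qed
  then show ?thesis using that by blast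
qed

context
  fixes g :: "'a::field_char_0 poly"
  assumes degree_g: "degree g \<ge> 2"
begin

lemma degree_comp_diff:
  assumes "comp_diff g p \<noteq> 0"
  shows "degree (comp_diff g p) = degree p * degree g" and "degree p \<ge> 1"
proof -
  show "degree p \<ge> 1"
    using assms comp_diff_const[of p g] by (cases "degree p = 0") auto
  then have "degree p < degree (p \<circ>\<^sub>p g)"
    using degree_g by (simp add: degree_pcompose)
  then show "degree (comp_diff g p) = degree p * degree g"
    by (simp add: comp_diff_def degree_diff_eq_right degree_pcompose)
qed

text \<open>With \<open>A = u \<circ>\<^sub>p g\<close>, \<open>(A + r)\<^sup>2 = p - p \<circ>\<^sub>p g\<close> would give \<open>(p + u\<^sup>2) \<circ>\<^sub>p g = p - (2 A r + r\<^sup>2)\<close>, a composite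
  whose degree \<open>deg A + deg r\<close> is not a multiple of \<open>deg g\<close>.\<close>
lemma square_notin_range_comp_diff:
  assumes "r \<noteq> 0" and "degree r < degree (u \<circ>\<^sub>p g)" and "\<not> degree g dvd degree r"
  shows "(u \<circ>\<^sub>p g + r) ^ 2 \<notin> range (comp_diff g)"
proof
  define A k e where "A = u \<circ>\<^sub>p g" and "k = degree (u \<circ>\<^sub>p g)" and "e = degree r"
  define w where "w = smult 2 (A * r) + r ^ 2"
  assume "(u \<circ>\<^sub>p g + r) ^ 2 \<in> range (comp_diff g)"
  then obtain p where p: "(A + r) ^ 2 = comp_diff g p"
    by (auto simp: A_def)
  have "e \<noteq> 0"
    using assms(3) by (metis dvd_0_right e_def)
  have "e < k"
    using assms(2) by (simp add: e_def k_def)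
  then have "A \<noteq> 0" by (auto simp: k_def A_def)
  have "degree (smult 2 (A * r)) = k + e"
    using \<open>A \<noteq> 0\<close> assms(1) by (simp add: degree_mult_eq A_def k_def e_def)
  moreover have "degree (r ^ 2) < k + e"
    using \<open>e < k\<close> by (simp add: degree_power_eq assms(1) e_def)
  ultimately have degree_w: "degree w = k + e"
    unfolding w_def by (simp add: degree_add_eq_left)
  have square: "(A + r) ^ 2 = A ^ 2 + w"
  proof -
    have "smult 2 (A * r) = A * r + A * r"
      by (metis one_add_one smult_add_left smult_1_left)
    then show ?thesis
      by (simp add: w_def power2_eq_square algebra_simps)
  qed
  have "degree (A + r) = k"
    using \<open>e < k\<close> by (simp add: degree_add_eq_left A_def k_def e_def)
  moreover from this have "A + r \<noteq> 0"
    using \<open>e < k\<close> by auto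
  ultimately have "degree (comp_diff g p) = 2 * k" and "comp_diff g p \<noteq> 0"
    by (simp_all add: degree_power_eq flip: p)
  then have "2 * k = degree p * degree g"
    using degree_comp_diff(1) by simp
  moreover have "degree p * 2 \<le> degree p * degree g"
    using degree_g by simp
  ultimately have "degree p < degree w"
    using \<open>e \<noteq> 0\<close> degree_w by linarith
  have "p \<circ>\<^sub>p g = p - A ^ 2 - w"
    using p square by (simp add: comp_diff_def algebra_simps)
  then have "(p + u ^ 2) \<circ>\<^sub>p g = p - w"
    by (simp add: pcompose_add pcompose_power_left A_def)
  then have "degree (p + u ^ 2) * degree g = degree (p - w)"
    by (metis degree_pcompose)
  also have "\<dots> = k + e"
    using \<open>degree p < degree w\<close> degree_w by (simp add: degree_diff_eq_right)
  finally have "degree (p + u ^ 2) * degree g = k + e" .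
  moreover have "k = degree u * degree g"
    by (simp add: k_def degree_pcompose)
  ultimately have "degree g dvd e"
    by (metis dvd_add_right_iff dvd_triv_right)
  then show False
    using assms(3) by (simp add: e_def)
qed

lemma pcompose_if_square_in_range_comp_diff:
  assumes "a \<in> range (comp_diff g)" and "a ^ 2 \<in> range (comp_diff g)"
  obtains u where "a = u \<circ>\<^sub>p g"
proof -
  obtain u r where a: "a = u \<circ>\<^sub>p g + r" and r: "r = 0 \<or> \<not> degree g dvd degree r"
    using pcompose_remainder[of g a] degree_g by auto
  show ?thesis
  proof (cases "r = 0")
    case True
    then show ?thesis using a that by simp
  next
    case False
    then have ndvd: "\<not> degree g dvd degree r" using r by simp
    moreover have "degree (u \<circ>\<^sub>p g) = degree u * degree g"
      by (rule degree_pcompose)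
    ultimately have "degree r \<noteq> degree (u \<circ>\<^sub>p g)" by auto
    moreover have "\<not> degree r < degree (u \<circ>\<^sub>p g)"
      using square_notin_range_comp_diff[OF False _ ndvd] assms(2) a by blast
    ultimately have "degree a = degree r"
      by (simp add: a degree_add_eq_right)
    moreover obtain p where "a = comp_diff g p"
      using assms(1) by blast
    moreover have "a \<noteq> 0"
      using ndvd \<open>degree a = degree r\<close> by auto
    ultimately have "degree g dvd degree r"
      using degree_comp_diff(1)[of p] by simp
    with ndvd show ?thesis by simp
  qed
qed

text \<open>Such an \<open>a\<close> is a composite \<open>u \<circ>\<^sub>p g\<close>, and the powers of the shorter \<open>u\<close> again lie in the range
  since \<open>u\<^sup>m = comp_diff g (u\<^sup>m) + a\<^sup>m\<close>.\<close>
lemma eq_0_if_powers_in_range_comp_diff: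
  assumes "\<forall>m::nat. m \<ge> 1 \<longrightarrow> a ^ m \<in> range (comp_diff g)"
  shows "a = 0"
  using assms
proof (induction "degree a" arbitrary: a rule: less_induct)
  case less
  then have a1: "a \<in> range (comp_diff g)" and a2: "a ^ 2 \<in> range (comp_diff g)"
    by auto
  obtain u where u: "a = u \<circ>\<^sub>p g"
    using pcompose_if_square_in_range_comp_diff[OF a1 a2] .
  show ?case
  proof (cases "degree a = 0")
    case True
    obtain p where p: "a = comp_diff g p" using a1 by blast
    show ?thesis
    proof (rule ccontr)
      assume "a \<noteq> 0"
      then have "degree a = degree p * degree g" and "degree p \<ge> 1"
        using degree_comp_diff[of p] p by auto
      then show False
        using True degree_g by simp
    qed
  next
    case False
    have "degree a = degree u * degree g"
      using u by (simp add: degree_pcompose)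
    then have "degree u < degree a"
      using False degree_g by simp
    moreover have "u ^ m \<in> range (comp_diff g)" if m: "m \<ge> 1" for m :: nat
    proof -
      obtain q where q: "a ^ m = comp_diff g q"
        using less.prems m by blast
      have "u ^ m = comp_diff g (u ^ m) + a ^ m"
        by (simp add: comp_diff_def u pcompose_power_left)
      also have "\<dots> = comp_diff g (u ^ m + q)"
        using q by (simp add: comp_diff_def pcompose_add)
      finally show ?thesis by simp
    qed
    ultimately have "u = 0"
      using less.hyps by blast
    then show ?thesis using u by simp
  qed
qed

end

lemma Mathieu_subspace_range_comp_diff:
  fixes g :: "'a::field_char_0 poly"
  shows "Mathieu_subspace (range (comp_diff g))"
proof (cases "degree g \<le> 1")
  case True
  then show ?thesis by (rule Mathieu_subspace_range_comp_diff_affine)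
next
  case False
  then show ?thesis
    by (intro Mathieu_subspace_if_only_0_has_powers_in[OF K_subspace_range[OF K_linear_comp_diff]]
        eq_0_if_powers_in_range_comp_diff) simp_all
qed

section \<open>\<open>\<E>\<close>-derivations\<close>

lemma K_algebra_hom_eq_pcompose:
  assumes "K_linear \<phi>" and "\<And>p q. \<phi> (p * q) = \<phi> p * \<phi> q" and "\<phi> 1 = 1"
  shows "\<phi> p = p \<circ>\<^sub>p \<phi> [:0, 1:]"
proof (induction p rule: pCons_induct)
  case 0
  then show ?case using assms(1) by (simp add: K_linear_zero)
next
  case (pCons a p)
  have const: "\<phi> [:a:] = [:a:]"
    using K_linear_smult[OF assms(1), of a 1] assms(3) by simp
  have "pCons a p = [:a:] + [:0, 1:] * p" by simp
  then have "\<phi> (pCons a p) = \<phi> [:a:] + \<phi> [:0, 1:] * \<phi> p"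
    by (metis K_linear_add[OF assms(1)] assms(2))
  then show ?case
    using pCons by (simp add: const pcompose_pCons)
qed

text \<open>The endomorphism \<open>\<phi> = id - \<delta>\<close> has \<open>\<phi> 1\<close> idempotent, so either \<open>\<phi> = 0\<close> or \<open>\<phi>\<close> is unital and
  hence a substitution.\<close>
lemma K_E_derivation_cases:
  assumes "K_E_derivation \<delta>"
  shows "\<delta> = id \<or> (\<exists>g. \<delta> = comp_diff g)"
proof -
  define \<phi> where "\<phi> p = p - \<delta> p" for p
  have "K_linear \<delta>"
    using assms by (simp add: K_E_derivation_def)
  then have lin: "K_linear \<phi>"
    unfolding K_linear_def \<phi>_def by (simp add: K_linear_add K_linear_smult smult_diff_right)
  have mult: "\<phi> (p * q) = \<phi> p * \<phi> q" for p q
    using assms unfolding K_E_derivation_def \<phi>_def by (simp add: algebra_simps)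
  have "\<phi> 1 * (\<phi> 1 - 1) = 0"
    using mult[of 1 1] by (simp add: algebra_simps)
  then consider "\<phi> 1 = 0" | "\<phi> 1 = 1"
    by (metis eq_iff_diff_eq_0 mult_eq_0_iff)
  then show ?thesis
  proof cases
    case 1
    then have "\<delta> p = p" for p
      using mult[of p 1] by (simp add: \<phi>_def)
    then show ?thesis by auto
  next
    case 2
    have "\<delta> p = comp_diff (\<phi> [:0, 1:]) p" for p
      using K_algebra_hom_eq_pcompose[OF lin mult 2, of p]
      unfolding comp_diff_def \<phi>_def[of p] by (simp add: algebra_simps)
    then show ?thesis by blast
  qed
qed

theorem theorem1p5:
  fixes \<delta> :: "'a::field_char_0 poly \<Rightarrow> 'a poly"
  assumes "K_derivation \<delta> \<or> K_E_derivation \<delta>"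
  shows "Mathieu_subspace (range \<delta>)"
  using assms
proof
  assume "K_derivation \<delta>"
  then show ?thesis by (rule Mathieu_subspace_range_K_derivation)
next
  assume "K_E_derivation \<delta>"
  then consider "\<delta> = id" | g where "\<delta> = comp_diff g"
    using K_E_derivation_cases by blast
  then show ?thesis
    by cases (simp_all add: Mathieu_subspace_UNIV Mathieu_subspace_range_comp_diff)
qed

end
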